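(* Let $m\ge1$ and consider $Q_{2,m+1}$ with dimension vector $\alpha=(m,1;1,\dots,1)$ ($m+1$ sinks, each of dimension $1$). Then the graded ring of semi-invariants $\bigoplus_{k\ge0}\{f\in\mathbb{C}[\mathrm{Rep}_\alpha Q]: f(g\cdot V)=\chi_\theta(g)^kf(V)\ \forall g\}$ is a polynomial ring in $m+1$ algebraically independent generators of degree $1$; consequently $M^{ss}_\alpha(Q_{2,m+1},\theta)\cong\mathbb{P}^m$.
   Context: $Q_{p,q}$ is the bipartite quiver with $p$ source vertices $v_1,\dots,v_p$, $q$ sink vertices $w_1,\dots,w_q$, and exactly one arrow from each $v_i$ to each $w_j$; a dimension vector is written $\alpha=(a_1,\dots,a_p;b_1,\dots,b_q)$, $\mathrm{Rep}_\alpha Q=\prod_{i,j}\mathrm{Hom}_{\mathbb{C}}(\mathbb{C}^{a_i},\mathbb{C}^{b_j})$, and $\mathrm{GL}_\alpha=\prod_i\mathrm{GL}_{a_i}\times\prod_j\mathrm{GL}_{b_j}$ acts by base change. $\theta=(-1,\dots,-1;1,\dots,1)$, $\chi_\theta(g)=\prod_i\det(g_i)^{-1}\prod_j\det(h_j)$ for $g=(g_1,\dots,g_p;h_1,\dots,h_q)$, and $M^{ss}_\alpha(Q,\theta)=\mathrm{Proj}$ of the graded ring of semi-invariants of weights $\chi_\theta^k$, $k\ge0$ (the moduli space of $\theta$-semistable representations). *)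

theory Defs
  imports Complex_Main "Jordan_Normal_Form.Gauss_Jordan_Elimination" "Jordan_Normal_Form.Determinant"
begin

text \<open>Bipartite quiver Q_{p,q}: sources v_0..v_{p-1}, sinks w_0..w_{q-1}, one arrow
  v_i -> w_j for each i < p, j < q.  A representation V assigns to the arrow v_i -> w_j a
  complex (b j) x (a i) matrix V i j.\<close>

type_synonym qrep = "nat \<Rightarrow> nat \<Rightarrow> complex mat"

definition Rep :: "nat \<Rightarrow> nat \<Rightarrow> (nat \<Rightarrow> nat) \<Rightarrow> (nat \<Rightarrow> nat) \<Rightarrow> qrep set" where
  "Rep p q a b = {V. \<forall>i<p. \<forall>j<q. V i j \<in> carrier_mat (b j) (a i)}"

inductive polyfun :: "nat \<Rightarrow> nat \<Rightarrow> (nat \<Rightarrow> nat) \<Rightarrow> (nat \<Rightarrow> nat) \<Rightarrow> (qrep \<Rightarrow> complex) \<Rightarrow> bool"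
  for p q a b where
  pf_const: "polyfun p q a b (\<lambda>V. c)"
| pf_coord: "i < p \<Longrightarrow> j < q \<Longrightarrow> r < b j \<Longrightarrow> s < a i \<Longrightarrow> polyfun p q a b (\<lambda>V. V i j $$ (r, s))"
| pf_add: "polyfun p q a b f \<Longrightarrow> polyfun p q a b g \<Longrightarrow> polyfun p q a b (\<lambda>V. f V + g V)"
| pf_mult: "polyfun p q a b f \<Longrightarrow> polyfun p q a b g \<Longrightarrow> polyfun p q a b (\<lambda>V. f V * g V)"

definition GL :: "nat \<Rightarrow> nat \<Rightarrow> (nat \<Rightarrow> nat) \<Rightarrow> (nat \<Rightarrow> nat)
    \<Rightarrow> ((nat \<Rightarrow> complex mat) \<times> (nat \<Rightarrow> complex mat)) set" where
  "GL p q a b = {(g, h). (\<forall>i<p. g i \<in> carrier_mat (a i) (a i) \<and> det (g i) \<noteq> 0)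
                      \<and> (\<forall>j<q. h j \<in> carrier_mat (b j) (b j) \<and> det (h j) \<noteq> 0)}"

definition minv :: "complex mat \<Rightarrow> complex mat" where
  "minv M = the (mat_inverse M)"

definition act :: "(nat \<Rightarrow> complex mat) \<times> (nat \<Rightarrow> complex mat) \<Rightarrow> qrep \<Rightarrow> qrep" where
  "act gh V = (\<lambda>i j. snd gh j * V i j * minv (fst gh i))"

text \<open>chi_theta for theta = (-1,...,-1; 1,...,1).\<close>
definition chi_theta :: "nat \<Rightarrow> nat \<Rightarrow> (nat \<Rightarrow> complex mat) \<times> (nat \<Rightarrow> complex mat) \<Rightarrow> complex" where
  "chi_theta p q gh = (\<Prod>j<q. det (snd gh j)) / (\<Prod>i<p. det (fst gh i))"

definition SI :: "nat \<Rightarrow> nat \<Rightarrow> (nat \<Rightarrow> nat) \<Rightarrow> (nat \<Rightarrow> nat) \<Rightarrow> nat \<Rightarrow> (qrep \<Rightarrow> complex) set" where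
  "SI p q a b k = {f. polyfun p q a b f \<and>
     (\<forall>gh \<in> GL p q a b. \<forall>V \<in> Rep p q a b. f (act gh V) = chi_theta p q gh ^ k * f V)}"

definition expvecs :: "nat \<Rightarrow> nat \<Rightarrow> (nat \<Rightarrow> nat) set" where
  "expvecs n k = {e. (\<forall>i>n. e i = 0) \<and> (\<Sum>i\<le>n. e i) = k}"

definition monom :: "nat \<Rightarrow> (nat \<Rightarrow> qrep \<Rightarrow> complex) \<Rightarrow> (nat \<Rightarrow> nat) \<Rightarrow> qrep \<Rightarrow> complex" where
  "monom n F e V = (\<Prod>i\<le>n. F i V ^ e i)"

end

theory Submission
  imports Defs
begin

(* Index conventions: source 0 has dimension m and source 1 dimension 1, so V 0 j is the 1 x m
  matrix of the arrow from source 0 into sink j and V 1 j the 1 x 1 matrix of the arrow from source 1.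

  The generators are gen m j V = V_1j * det (minor m j V), where the minor consists of the rows V 0 r
  for r <> j; each is a semi-invariant of weight chi_theta.  Where all of them are nonzero, a base
  change moves V into the slice (rows V 0 r fixed to (1,...,1), e_1, ..., e_m and free scalars y_j),
  and f V = beta^k f (slice y) for every semi-invariant f of weight chi_theta^k.  Homogeneity under
  the torus acting on source 1 makes f (slice y) a homogeneous polynomial of degree k in y, while
  gen m j (slice y) = c_j y_j with c_j <> 0.  So f agrees with a polynomial in the generators on a
  dense open set, hence everywhere.  On the slice, distinct monomials in the generators become
  nonzero multiples of distinct monomials in y, which gives independence. *)

lemma polyfun_sum:
  "finite S \<Longrightarrow> (\<And>x. x \<in> S \<Longrightarrow> polyfun p q a b (f x)) \<Longrightarrow> polyfun p q a b (\<lambda>V. \<Sum>x\<in>S. f x V)"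
proof (induction S rule: finite_induct)
  case empty then show ?case using pf_const[of p q a b 0] by simp
next
  case (insert x F) then show ?case by (simp add: pf_add)
qed

lemma polyfun_prod:
  "finite S \<Longrightarrow> (\<And>x. x \<in> S \<Longrightarrow> polyfun p q a b (f x)) \<Longrightarrow> polyfun p q a b (\<lambda>V. \<Prod>x\<in>S. f x V)"
proof (induction S rule: finite_induct)
  case empty then show ?case using pf_const[of p q a b 1] by simp
next
  case (insert x F) then show ?case by (simp add: pf_mult)
qed

lemma polyfun_det:
  assumes "\<And>V. M V \<in> carrier_mat n n"
    and "\<And>r s. r < n \<Longrightarrow> s < n \<Longrightarrow> polyfun p q a b (\<lambda>V. M V $$ (r,s))"
  shows "polyfun p q a b (\<lambda>V. det (M V))"
proof -
  have "(\<lambda>V. det (M V)) =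
      (\<lambda>V. \<Sum>P\<in>{P. P permutes {0..<n}}. of_int (signof P) * (\<Prod>i\<in>{0..<n}. M V $$ (i, P i)))"
    using det_def'[OF assms(1)] by (auto simp: sign_def)
  moreover have "polyfun p q a b (\<lambda>V. M V $$ (i, P i))" if "P permutes {0..<n}" "i < n" for P i
    using assms(2) permutes_in_image[OF that(1)] that(2) by auto
  ultimately show ?thesis
    by (auto intro!: polyfun_sum polyfun_prod pf_mult[OF pf_const] simp: finite_permutations)
qed

lemma polyfun_coord_cong:
  "polyfun p q a b f \<Longrightarrow>
   (\<And>i j r s. i < p \<Longrightarrow> j < q \<Longrightarrow> r < b j \<Longrightarrow> s < a i \<Longrightarrow> V i j $$ (r,s) = W i j $$ (r,s)) \<Longrightarrow>
   f V = f W"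
  by (induction rule: polyfun.induct) auto

definition line_rep :: "qrep \<Rightarrow> qrep \<Rightarrow> complex \<Rightarrow> qrep" where
  "line_rep W V t = (\<lambda>i j. mat (dim_row (V i j)) (dim_col (V i j))
      (\<lambda>(r,s). W i j $$ (r,s) + t * (V i j $$ (r,s) - W i j $$ (r,s))))"

lemma line_rep_Rep: "V \<in> Rep p q a b \<Longrightarrow> line_rep W V t \<in> Rep p q a b"
  unfolding Rep_def line_rep_def carrier_mat_def by simp

lemma polyfun_along_line:
  "polyfun p q a b f \<Longrightarrow> V \<in> Rep p q a b \<Longrightarrow> \<exists>P. \<forall>t. f (line_rep W V t) = poly P t"
proof (induction rule: polyfun.induct)
  case (pf_const c) then show ?case by (intro exI[of _ "[:c:]"]) simp
next
  case (pf_coord i j r s)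
  then have "V i j \<in> carrier_mat (b j) (a i)" unfolding Rep_def by auto
  then show ?case using pf_coord
    by (intro exI[of _ "[:W i j $$ (r,s), V i j $$ (r,s) - W i j $$ (r,s):]"]) (auto simp: line_rep_def)
next
  case (pf_add f g)
  then obtain P Q where "\<forall>t. f (line_rep W V t) = poly P t" "\<forall>t. g (line_rep W V t) = poly Q t" by blast
  then show ?case by (intro exI[of _ "P + Q"]) simp
next
  case (pf_mult f g)
  then obtain P Q where "\<forall>t. f (line_rep W V t) = poly P t" "\<forall>t. g (line_rep W V t) = poly Q t" by blast
  then show ?case by (intro exI[of _ "P * Q"]) simp
qed

lemma line_rep_entry:
  assumes "V \<in> Rep p q a b" "i < p" "j < q" "r < b j" "s < a i"
  shows "line_rep W V t i j $$ (r,s) = W i j $$ (r,s) + t * (V i j $$ (r,s) - W i j $$ (r,s))"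
proof -
  have "V i j \<in> carrier_mat (b j) (a i)" using assms unfolding Rep_def by blast
  then show ?thesis using assms(4,5) by (simp add: line_rep_def)
qed

lemma polyfun_line_rep_0:
  assumes "polyfun p q a b f" "V \<in> Rep p q a b" shows "f (line_rep W V 0) = f W"
  using assms(1) by (rule polyfun_coord_cong) (simp add: line_rep_entry[OF assms(2)])

lemma polyfun_line_rep_1:
  assumes "polyfun p q a b f" "V \<in> Rep p q a b" shows "f (line_rep W V 1) = f V"
  using assms(1) by (rule polyfun_coord_cong) (simp add: line_rep_entry[OF assms(2)])

lemma poly_eq_0_if_infinite_zeros:
  assumes "infinite S" "\<And>x. x \<in> S \<Longrightarrow> poly p x = 0" shows "p = (0::complex poly)"
  using assms finite_subset[OF _ poly_roots_finite, of S p] by blast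

lemma polyfun_eq_if_eq_off_zeros:
  assumes f1: "polyfun p q a b f1" and f2: "polyfun p q a b f2" and h: "polyfun p q a b h"
    and W: "W \<in> Rep p q a b" "h W \<noteq> 0"
    and eq: "\<And>V. V \<in> Rep p q a b \<Longrightarrow> h V \<noteq> 0 \<Longrightarrow> f1 V = f2 V"
    and V: "V \<in> Rep p q a b"
  shows "f1 V = f2 V"
proof -
  have "polyfun p q a b (\<lambda>V. f1 V + (-1) * f2 V)"
    by (intro pf_add f1 pf_mult pf_const f2)
  then obtain P where P: "\<forall>t. f1 (line_rep W V t) + (-1) * f2 (line_rep W V t) = poly P t"
    using polyfun_along_line[OF _ V] by blast
  obtain H where H: "\<forall>t. h (line_rep W V t) = poly H t"
    using polyfun_along_line[OF h V] by blast
  have "poly H 0 \<noteq> 0" using H polyfun_line_rep_0[OF h V, of W] W(2) by simp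
  then have "finite {t. poly H t = 0}" by (intro poly_roots_finite) auto
  then have "infinite (- {t. poly H t = 0})"
    by (simp add: Compl_eq_Diff_UNIV Diff_infinite_finite infinite_UNIV_char_0)
  moreover have "poly P t = 0" if "t \<in> - {t. poly H t = 0}" for t
  proof -
    have "f1 (line_rep W V t) = f2 (line_rep W V t)"
      using that H eq[OF line_rep_Rep[OF V]] by auto
    then show ?thesis using P by (metis add_eq_0_iff mult_minus1)
  qed
  ultimately have "P = 0" by (rule poly_eq_0_if_infinite_zeros)
  then have "f1 (line_rep W V 1) = f2 (line_rep W V 1)" using P
    by (metis poly_0 add_eq_0_iff mult_minus1 minus_minus)
  then show ?thesis using polyfun_line_rep_1[OF f1 V] polyfun_line_rep_1[OF f2 V] by simp
qed

lemma polyfuns_common_nonzero: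
  "(\<And>j. j < (n::nat) \<Longrightarrow> polyfun p q a b (h j)) \<Longrightarrow>
   (\<And>j. j < n \<Longrightarrow> \<exists>V\<in>Rep p q a b. h j V \<noteq> 0) \<Longrightarrow>
   V0 \<in> Rep p q a b \<Longrightarrow> \<exists>V\<in>Rep p q a b. \<forall>j<n. h j V \<noteq> 0"
proof (induction n)
  case 0 then show ?case by auto
next
  case (Suc n)
  obtain U where U: "U \<in> Rep p q a b" "\<forall>j<n. h j U \<noteq> 0" using Suc by fastforce
  obtain V' where V': "V' \<in> Rep p q a b" "h n V' \<noteq> 0" using Suc.prems(2)[of n] by auto
  have "\<forall>j. \<exists>P. j < Suc n \<longrightarrow> (\<forall>t. h j (line_rep U V' t) = poly P t)"
    using polyfun_along_line[OF Suc.prems(1) V'(1)] by blast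
  then obtain P where P: "\<And>j t. j < Suc n \<Longrightarrow> h j (line_rep U V' t) = poly (P j) t"
    by metis
  have "P j \<noteq> 0" if "j < Suc n" for j
  proof (cases "j < n")
    case True
    then show ?thesis using P[OF that, of 0] polyfun_line_rep_0[OF Suc.prems(1)[OF that] V'(1)] U by auto
  next
    case False
    then show ?thesis using P[OF that, of 1] polyfun_line_rep_1[OF Suc.prems(1)[OF that] V'(1)] V' that
      by (auto simp: less_Suc_eq)
  qed
  then have "(\<Prod>j<Suc n. P j) \<noteq> 0" by (simp add: prod_zero_iff)
  then obtain t where "poly (\<Prod>j<Suc n. P j) t \<noteq> 0" using poly_all_0_iff_0 by blast
  then have "\<forall>j<Suc n. h j (line_rep U V' t) \<noteq> 0" using P by (auto simp: poly_prod prod_zero_iff less_Suc_eq)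
  then show ?case using line_rep_Rep[OF V'(1)] by blast
qed

lemma mult_if_zero_left: "(if P then c else 0) * x = (if P then c * x else (0::'a::mult_zero))"
  by simp

lemma mult_if_zero_right: "x * (if P then c else 0) = (if P then x * c else (0::'a::mult_zero))"
  by simp

lemma minv_inverse:
  assumes A: "A \<in> carrier_mat n n" and d: "det A \<noteq> 0"
  shows "A * minv A = 1\<^sub>m n" "minv A * A = 1\<^sub>m n" "minv A \<in> carrier_mat n n"
proof -
  obtain B where B: "mat_inverse A = Some B"
    using mat_inverse(1)[OF A] det_non_zero_imp_unit[OF A d] by (metis option.exhaust)
  then show "A * minv A = 1\<^sub>m n" "minv A * A = 1\<^sub>m n" "minv A \<in> carrier_mat n n"
    using mat_inverse(2)[OF A B] by (auto simp: minv_def)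
qed

lemma minv_eqI:
  assumes A: "A \<in> carrier_mat n n" and d: "det A \<noteq> 0" and B: "B \<in> carrier_mat n n"
    and BA: "B * A = 1\<^sub>m n"
  shows "minv A = B"
proof -
  note Ainv = minv_inverse[OF A d]
  have "minv A = (B * A) * minv A" using BA Ainv(3) by simp
  also have "\<dots> = B * (A * minv A)" using assoc_mult_mat[OF B A Ainv(3)] .
  finally show ?thesis using Ainv(1) B by simp
qed

lemma det_minv: "A \<in> carrier_mat n n \<Longrightarrow> det A \<noteq> 0 \<Longrightarrow> det (minv A) = 1 / det A"
  using det_mult[OF minv_inverse(3) _, of A n A] minv_inverse(2)[of A n]
  by (simp add: field_simps)

lemma det_zero_column:
  assumes X: "X \<in> carrier_mat n n" and s: "s < n" and z: "\<And>r. r < n \<Longrightarrow> X $$ (r,s) = 0"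
  shows "det X = (0::complex)"
proof -
  have "(\<Prod>i = 0..<n. X $$ (i, P i)) = 0" if P: "P permutes {0..<n}" for P
  proof -
    have "inv_into UNIV P s \<in> {0..<n}" "P (inv_into UNIV P s) = s"
      using permutes_in_image[OF permutes_inv[OF P]] s permutes_inverses(1)[OF P] by auto
    then show ?thesis using z by (intro prod_zero) force+
  qed
  then show ?thesis unfolding det_def'[OF X] by (intro sum.neutral) auto
qed

lemma det_scale_rows:
  assumes X: "X \<in> carrier_mat n n"
  shows "det (mat n n (\<lambda>(r,s). c r * X $$ (r,s))) = (\<Prod>r<n. c r) * (det X :: complex)"
proof -
  define D where "D = mat n n (\<lambda>(r,s). if r = s then c r else 0)"
  have D: "D \<in> carrier_mat n n" unfolding D_def by simp
  have "mat n n (\<lambda>(r,s). c r * X $$ (r,s)) = D * X"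
  proof (rule eq_matI)
    fix i j assume "i < dim_row (D * X)" "j < dim_col (D * X)"
    then have ij: "i < n" "j < n" using D X by auto
    have "(D * X) $$ (i, j) = (\<Sum>t = 0..<n. (if i = t then c i else 0) * X $$ (t, j))"
      using X ij unfolding D_def by (simp add: scalar_prod_def)
    also have "\<dots> = (\<Sum>t = 0..<n. if i = t then c i * X $$ (t, j) else 0)"
      by (rule sum.cong) auto
    finally show "mat n n (\<lambda>(r,s). c r * X $$ (r,s)) $$ (i, j) = (D * X) $$ (i, j)"
      using ij by (simp add: sum.delta)
  qed (use D X in auto)
  moreover have "det D = (\<Prod>r<n. c r)"
    using det_upper_triangular[OF _ D]
    by (simp add: D_def upper_triangular_def prod_list_diag_prod atLeast0LessThan)
  ultimately show ?thesis using det_mult[OF D X] by simp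
qed

lemma det_diagonal:
  "det (mat n n (\<lambda>(r,s). if r = s then c r else 0)) = (\<Prod>r<n. c r :: complex)"
proof -
  have "mat n n (\<lambda>(r,s). if r = s then c r else 0) = mat n n (\<lambda>(r,s). c r * (1\<^sub>m n :: complex mat) $$ (r,s))"
    by (rule eq_matI) auto
  then show ?thesis using det_scale_rows[of "1\<^sub>m n" n c] by simp
qed

lemma det_1x1: "det (mat (Suc 0) (Suc 0) (\<lambda>_. c)) = c"
  by (subst det_single) auto

abbreviation RepQ :: "nat \<Rightarrow> qrep set" where
  "RepQ m \<equiv> Rep 2 (m+1) (\<lambda>i. if i = 0 then m else 1) (\<lambda>j. 1)"

abbreviation GLQ :: "nat \<Rightarrow> ((nat \<Rightarrow> complex mat) \<times> (nat \<Rightarrow> complex mat)) set" where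
  "GLQ m \<equiv> GL 2 (m+1) (\<lambda>i. if i = 0 then m else 1) (\<lambda>j. 1)"

abbreviation SIQ :: "nat \<Rightarrow> nat \<Rightarrow> (qrep \<Rightarrow> complex) set" where
  "SIQ m k \<equiv> SI 2 (m+1) (\<lambda>i. if i = 0 then m else 1) (\<lambda>j. 1) k"

abbreviation polyfunQ :: "nat \<Rightarrow> (qrep \<Rightarrow> complex) \<Rightarrow> bool" where
  "polyfunQ m \<equiv> polyfun 2 (m+1) (\<lambda>i. if i = 0 then m else 1) (\<lambda>j. 1)"

lemma RepQ_D:
  assumes "V \<in> RepQ m" "j \<le> m"
  shows "V 0 j \<in> carrier_mat 1 m" "V 1 j \<in> carrier_mat 1 1"
proof -
  have "\<forall>i<2. V i j \<in> carrier_mat 1 (if i = 0 then m else 1)" using assms unfolding Rep_def by auto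
  from this[rule_format, of 0] this[rule_format, of 1] show "V 0 j \<in> carrier_mat 1 m" "V 1 j \<in> carrier_mat 1 1"
    by simp_all
qed

lemma GLQ_D:
  assumes "(g, h) \<in> GLQ m"
  shows "g 0 \<in> carrier_mat m m" "det (g 0) \<noteq> 0" "g 1 \<in> carrier_mat 1 1" "det (g 1) \<noteq> 0"
    "\<And>j. j \<le> m \<Longrightarrow> h j \<in> carrier_mat 1 1 \<and> det (h j) \<noteq> 0"
proof -
  have g: "\<forall>i<2. g i \<in> carrier_mat (if i = 0 then m else 1) (if i = 0 then m else 1) \<and> det (g i) \<noteq> 0"
    and "\<forall>j<m+1. h j \<in> carrier_mat 1 1 \<and> det (h j) \<noteq> 0"
    using assms unfolding GL_def by auto
  then show "\<And>j. j \<le> m \<Longrightarrow> h j \<in> carrier_mat 1 1 \<and> det (h j) \<noteq> 0" by auto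
  from g[rule_format, of 0] g[rule_format, of 1]
  show "g 0 \<in> carrier_mat m m" "det (g 0) \<noteq> 0" "g 1 \<in> carrier_mat 1 1" "det (g 1) \<noteq> 0"
    by simp_all
qed

lemma GLQ_I:
  assumes "g 0 \<in> carrier_mat m m" "det (g 0) \<noteq> 0" "g 1 \<in> carrier_mat 1 1" "det (g 1) \<noteq> 0"
    "\<And>j. j \<le> m \<Longrightarrow> h j \<in> carrier_mat 1 1 \<and> det (h j) \<noteq> 0"
  shows "(g, h) \<in> GLQ m"
proof -
  have "i = 0 \<or> i = 1" if "i < 2" for i :: nat using that by auto
  then show ?thesis unfolding GL_def using assms by auto
qed

lemma SI_polyfun: "f \<in> SI p q a b k \<Longrightarrow> polyfun p q a b f"
  unfolding SI_def by auto

lemma SI_act: "f \<in> SI p q a b k \<Longrightarrow> gh \<in> GL p q a b \<Longrightarrow> V \<in> Rep p q a b \<Longrightarrow>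
  f (act gh V) = chi_theta p q gh ^ k * f V"
  unfolding SI_def by auto

lemma row_times_mat_entry:
  assumes h: "h \<in> carrier_mat 1 1" and X: "X \<in> carrier_mat 1 n" and G: "G \<in> carrier_mat n k"
    and s: "s < k"
  shows "(h * X * G) $$ (0,s) = h $$ (0,0) * (\<Sum>t=0..<n. X $$ (0,t) * G $$ (t,s))"
  using h X G s by (simp add: scalar_prod_def sum_distrib_left mult.assoc)

lemma actQ_entries:
  assumes gh: "(g, h) \<in> GLQ m" and V: "V \<in> RepQ m" and j: "j \<le> m"
  shows "s < m \<Longrightarrow>
      act (g, h) V 0 j $$ (0,s) = h j $$ (0,0) * (\<Sum>t=0..<m. V 0 j $$ (0,t) * minv (g 0) $$ (t,s))"
    and "act (g, h) V 1 j $$ (0,0) = h j $$ (0,0) * V 1 j $$ (0,0) / det (g 1)"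
proof -
  note G = GLQ_D[OF gh]
  note V = RepQ_D[OF V j]
  have hj: "h j \<in> carrier_mat 1 1" using G(5)[OF j] by auto
  show "s < m \<Longrightarrow> act (g, h) V 0 j $$ (0,s) =
      h j $$ (0,0) * (\<Sum>t=0..<m. V 0 j $$ (0,t) * minv (g 0) $$ (t,s))"
    using row_times_mat_entry[OF hj V(1) minv_inverse(3)[OF G(1,2)]] unfolding act_def by simp
  have "det (minv (g 1)) = minv (g 1) $$ (0,0)" by (rule det_single[OF minv_inverse(3)[OF G(3,4)]])
  then have "minv (g 1) $$ (0,0) = 1 / det (g 1)" using det_minv[OF G(3,4)] by simp
  then show "act (g, h) V 1 j $$ (0,0) = h j $$ (0,0) * V 1 j $$ (0,0) / det (g 1)"
    using row_times_mat_entry[OF hj V(2) minv_inverse(3)[OF G(3,4)], of 0] unfolding act_def by simp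
qed

lemma chi_thetaQ:
  assumes "(g, h) \<in> GLQ m"
  shows "chi_theta 2 (m+1) (g, h) = (\<Prod>j\<le>m. h j $$ (0,0)) / (det (g 0) * det (g 1))"
proof -
  have "(\<Prod>j<m+1. det (h j)) = (\<Prod>j\<le>m. h j $$ (0,0))"
    using GLQ_D(5)[OF assms] det_single by (auto simp: lessThan_Suc_atMost intro!: prod.cong)
  then show ?thesis unfolding chi_theta_def by (simp add: numeral_2_eq_2)
qed

lemma SIQ_base_change:
  assumes f: "f \<in> SIQ m k" and gh: "(g, h) \<in> GLQ m" and V: "V \<in> RepQ m"
    and src: "\<And>j s. j \<le> m \<Longrightarrow> s < m \<Longrightarrow>
      W 0 j $$ (0,s) = h j $$ (0,0) * (\<Sum>t=0..<m. V 0 j $$ (0,t) * minv (g 0) $$ (t,s))"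
    and snk: "\<And>j. j \<le> m \<Longrightarrow> W 1 j $$ (0,0) = h j $$ (0,0) * V 1 j $$ (0,0) / det (g 1)"
  shows "f W = ((\<Prod>j\<le>m. h j $$ (0,0)) / (det (g 0) * det (g 1))) ^ k * f V"
proof -
  have "f (act (g, h) V) = f W"
  proof (rule polyfun_coord_cong[OF SI_polyfun[OF f]])
    fix i j r s :: nat assume ijrs: "i < 2" "j < m + 1" "r < 1" "s < (if i = 0 then m else 1)"
    then consider "i = 0" "s < m" | "i = 1" "s = 0" by (cases "i = 0") auto
    then show "act (g, h) V i j $$ (r,s) = W i j $$ (r,s)"
      using ijrs actQ_entries[OF gh V] src snk by cases auto
  qed
  then show ?thesis using SI_act[OF f gh V] chi_thetaQ[OF gh] by simp
qed

definition skip :: "nat \<Rightarrow> nat \<Rightarrow> nat" where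
  "skip j r = (if r < j then r else Suc r)"

definition minor :: "nat \<Rightarrow> nat \<Rightarrow> qrep \<Rightarrow> complex mat" where
  "minor m j V = mat m m (\<lambda>(r,s). V 0 (skip j r) $$ (0,s))"

definition gen :: "nat \<Rightarrow> nat \<Rightarrow> qrep \<Rightarrow> complex" where
  "gen m j V = V 1 j $$ (0,0) * det (minor m j V)"

lemma skip_le: "j \<le> m \<Longrightarrow> r < m \<Longrightarrow> skip j r \<le> m"
  by (auto simp: skip_def)

lemma prod_skip:
  assumes "j \<le> m" shows "(f j :: complex) * (\<Prod>r<m. f (skip j r)) = (\<Prod>r\<le>m. f r)"
proof -
  have "inj_on (skip j) {..<m}" by (auto simp: inj_on_def skip_def split: if_splits)
  moreover have "skip j ` {..<m} = {..m} - {j}"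
  proof (intro equalityI subsetI)
    fix x assume "x \<in> {..m} - {j}"
    then show "x \<in> skip j ` {..<m}"
      using assms by (cases "x < j") (auto simp: skip_def image_iff intro: bexI[of _ "x - 1"])
  qed (use assms in \<open>auto simp: skip_def\<close>)
  ultimately have "(\<Prod>r<m. f (skip j r)) = (\<Prod>r\<in>{..m} - {j}. f r)"
    using prod.reindex[of "skip j" "{..<m}" f] by simp
  then show ?thesis using prod.remove[of "{..m}" j f] assms by simp
qed

lemma polyfun_gen: "j \<le> m \<Longrightarrow> polyfunQ m (gen m j)"
  unfolding gen_def
proof (rule pf_mult)
  assume j: "j \<le> m"
  then show "polyfunQ m (\<lambda>V. V 1 j $$ (0, 0))"
    using pf_coord[of 1 2 j "m+1" 0 "\<lambda>j. 1" 0 "\<lambda>i. if i = 0 then m else 1"] by simp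
  show "polyfunQ m (\<lambda>V. det (minor m j V))"
  proof (rule polyfun_det)
    fix r s assume "r < m" "s < m"
    then show "polyfunQ m (\<lambda>V. minor m j V $$ (r, s))"
      using pf_coord[of 0 2 "skip j r" "m+1" 0 "\<lambda>j. 1" s "\<lambda>i. if i = 0 then m else 1"] skip_le[OF j] by (simp add: minor_def less_Suc_eq_le)
  qed (simp add: minor_def)
qed

lemma minor_act:
  assumes gh: "(g, h) \<in> GLQ m" and V: "V \<in> RepQ m" and j: "j \<le> m"
  shows "minor m j (act (g, h) V) =
    mat m m (\<lambda>(r,s). h (skip j r) $$ (0,0) * (minor m j V * minv (g 0)) $$ (r,s))"
  using actQ_entries(1)[OF gh V skip_le[OF j]] minv_inverse(3)[OF GLQ_D(1,2)[OF gh]]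
  by (intro eq_matI) (auto simp: minor_def scalar_prod_def)

lemma gen_act:
  assumes gh: "(g, h) \<in> GLQ m" and V: "V \<in> RepQ m" and j: "j \<le> m"
  shows "gen m j (act (g, h) V) = chi_theta 2 (m+1) (g, h) * gen m j V"
proof -
  note G = GLQ_D[OF gh]
  have M: "minor m j V \<in> carrier_mat m m" by (simp add: minor_def)
  have "det (minor m j (act (g, h) V)) =
      (\<Prod>r<m. h (skip j r) $$ (0,0)) * (det (minor m j V) / det (g 0))"
    unfolding minor_act[OF gh V j]
    using det_scale_rows[OF mult_carrier_mat[OF M minv_inverse(3)[OF G(1,2)]]]
      det_mult[OF M minv_inverse(3)[OF G(1,2)]] det_minv[OF G(1,2)] by simp
  moreover have "h j $$ (0,0) * (\<Prod>r<m. h (skip j r) $$ (0,0)) = (\<Prod>j\<le>m. h j $$ (0,0))"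
    by (rule prod_skip[OF j])
  ultimately show ?thesis
    unfolding gen_def actQ_entries(2)[OF gh V j] chi_thetaQ[OF gh] by (simp add: field_simps)
qed

lemma gen_SIQ: "j \<le> m \<Longrightarrow> gen m j \<in> SIQ m 1"
  unfolding SI_def using polyfun_gen gen_act by fastforce

definition normal_rep :: "nat \<Rightarrow> (nat \<Rightarrow> complex) \<Rightarrow> (nat \<Rightarrow> complex) \<Rightarrow> qrep" where
  "normal_rep m u x = (\<lambda>i j.
     if i = 0 then mat 1 m (\<lambda>(_,s). if j = 0 then u s else if s = j - 1 then 1 else 0)
     else mat 1 1 (\<lambda>_. x j))"

abbreviation slice :: "nat \<Rightarrow> (nat \<Rightarrow> complex) \<Rightarrow> qrep" where
  "slice m y \<equiv> normal_rep m (\<lambda>_. 1) y"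

lemma normal_rep_Rep: "normal_rep m u x \<in> RepQ m"
  unfolding Rep_def normal_rep_def by auto

lemma SIQ_normalise:
  assumes f: "f \<in> SIQ m k" and V: "V \<in> RepQ m" and dB: "det (minor m 0 V) \<noteq> 0"
  shows "f V = det (minor m 0 V) ^ k * f (normal_rep m
    (\<lambda>s. \<Sum>t=0..<m. V 0 0 $$ (0,t) * minv (minor m 0 V) $$ (t,s)) (\<lambda>j. V 1 j $$ (0,0)))"
    (is "_ = _ * f ?N")
proof -
  define B where "B = minor m 0 V"
  have B: "B \<in> carrier_mat m m" unfolding B_def minor_def by simp
  note Binv = minv_inverse[OF B dB[folded B_def]]
  define g where "g = (\<lambda>i::nat. if i = 0 then B else 1\<^sub>m 1)"
  define h where "h = (\<lambda>j::nat. 1\<^sub>m 1 :: complex mat)"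
  have gh: "(g, h) \<in> GLQ m"
    by (rule GLQ_I) (use B dB in \<open>auto simp: g_def h_def B_def\<close>)
  have "f ?N = ((\<Prod>j\<le>m. h j $$ (0,0)) / (det (g 0) * det (g 1))) ^ k * f V"
  proof (rule SIQ_base_change[OF f gh V])
    fix j s assume js: "j \<le> m" "s < m"
    show "?N 0 j $$ (0,s) = h j $$ (0,0) * (\<Sum>t=0..<m. V 0 j $$ (0,t) * minv (g 0) $$ (t,s))"
    proof (cases "j = 0")
      case False
      \<comment> \<open>for \<open>j > 0\<close> the row \<open>V 0 j\<close> is row \<open>j - 1\<close> of \<open>B\<close>\<close>
      have "(B * minv B) $$ (j - 1, s) = (\<Sum>t=0..<m. V 0 j $$ (0,t) * minv B $$ (t,s))"
        using B Binv(3) js False by (simp add: scalar_prod_def B_def minor_def skip_def)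
      then show ?thesis using Binv(1) js False
        by (auto simp: normal_rep_def g_def h_def B_def split: if_splits)
    qed (use js in \<open>simp add: normal_rep_def g_def h_def B_def\<close>)
  qed (simp add: normal_rep_def g_def h_def)
  then show ?thesis using dB by (simp add: g_def h_def B_def field_simps power_divide)
qed

lemma SIQ_rescale:
  assumes u: "\<And>s. s < m \<Longrightarrow> u s \<noteq> 0" and f: "f \<in> SIQ m k"
  shows "f (normal_rep m u x) = f (slice m (\<lambda>j. if j = 0 then x 0 else u (j - 1) * x j))"
proof -
  define D where "D = mat m m (\<lambda>(r,s). if r = s then u r else 0)"
  define D' where "D' = mat m m (\<lambda>(r,s). if r = s then 1 / u r else 0)"
  define g where "g = (\<lambda>i::nat. if i = 0 then D else 1\<^sub>m 1)"
  define h where "h = (\<lambda>j::nat. if j = 0 then 1\<^sub>m 1 else mat 1 1 (\<lambda>_. u (j - 1)) :: complex mat)"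
  have D: "D \<in> carrier_mat m m" "D' \<in> carrier_mat m m" unfolding D_def D'_def by auto
  have detD: "det D = (\<Prod>r<m. u r)" unfolding D_def by (rule det_diagonal)
  then have detD0: "det D \<noteq> 0" using u by simp
  have "D' * D = 1\<^sub>m m"
  proof (rule eq_matI)
    fix r s assume "r < dim_row (1\<^sub>m m :: complex mat)" "s < dim_col (1\<^sub>m m :: complex mat)"
    then have rs: "r < m" "s < m" by auto
    then show "(D' * D) $$ (r,s) = 1\<^sub>m m $$ (r,s)"
      using u by (simp add: D_def D'_def scalar_prod_def mult_if_zero_left mult_if_zero_right)
  qed (use D in auto)
  then have minvD: "minv D = D'" using minv_eqI[OF D(1) detD0 D(2)] by simp
  have gh: "(g, h) \<in> GLQ m"
    by (rule GLQ_I) (use D detD0 u in \<open>auto simp: g_def h_def det_1x1\<close>)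
  have "(\<Prod>j\<le>m. h j $$ (0,0)) = det (g 0) * det (g 1)"
    unfolding prod.atMost_shift by (simp add: g_def h_def detD)
  moreover have "f (slice m (\<lambda>j. if j = 0 then x 0 else u (j - 1) * x j)) =
      ((\<Prod>j\<le>m. h j $$ (0,0)) / (det (g 0) * det (g 1))) ^ k * f (normal_rep m u x)"
  proof (rule SIQ_base_change[OF f gh normal_rep_Rep])
    fix j s assume js: "j \<le> m" "s < m"
    show "slice m (\<lambda>j. if j = 0 then x 0 else u (j - 1) * x j) 0 j $$ (0,s) =
        h j $$ (0,0) * (\<Sum>t=0..<m. normal_rep m u x 0 j $$ (0,t) * minv (g 0) $$ (t,s))"
      using js u by (cases "j = 0")
        (auto simp: normal_rep_def g_def h_def minvD D'_def mult_if_zero_left mult_if_zero_right)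
  qed (simp add: normal_rep_def g_def h_def)
  ultimately show ?thesis using detD0 by (simp add: g_def)
qed

lemma SIQ_slice_homogeneous:
  assumes l: "l \<noteq> 0" and f: "f \<in> SIQ m k"
  shows "f (slice m (\<lambda>j. l * y j)) = l ^ k * f (slice m y)"
proof -
  define g where "g = (\<lambda>i::nat. if i = 0 then 1\<^sub>m m else mat 1 1 (\<lambda>_. 1 / l) :: complex mat)"
  define h where "h = (\<lambda>j::nat. 1\<^sub>m 1 :: complex mat)"
  have gh: "(g, h) \<in> GLQ m"
    by (rule GLQ_I) (use l in \<open>auto simp: g_def h_def det_1x1\<close>)
  have "minv (1\<^sub>m m) = (1\<^sub>m m :: complex mat)" by (rule minv_eqI) auto
  then have "f (slice m (\<lambda>j. l * y j)) =
      ((\<Prod>j\<le>m. h j $$ (0,0)) / (det (g 0) * det (g 1))) ^ k * f (slice m y)"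
    by (intro SIQ_base_change[OF f gh normal_rep_Rep])
      (auto simp: g_def h_def normal_rep_def det_1x1 mult_if_zero_left mult_if_zero_right)
  then show ?thesis using l by (simp add: g_def h_def det_1x1)
qed

lemma gen_slice: "gen m j (slice m y) = y j * gen m j (slice m (\<lambda>_. 1))"
  unfolding gen_def minor_def normal_rep_def by simp

lemma SIQ_reduce_to_slice:
  assumes V: "V \<in> RepQ m" and gen_nz: "\<And>j. j \<le> m \<Longrightarrow> gen m j V \<noteq> 0"
  obtains \<beta> y where "\<beta> \<noteq> 0" "\<And>k f. f \<in> SIQ m k \<Longrightarrow> f V = \<beta> ^ k * f (slice m y)"
proof -
  define u where "u = (\<lambda>s. \<Sum>t=0..<m. V 0 0 $$ (0,t) * minv (minor m 0 V) $$ (t,s))"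
  define x where "x = (\<lambda>j. V 1 j $$ (0,0))"
  have dB: "det (minor m 0 V) \<noteq> 0" using gen_nz[of 0] unfolding gen_def by auto
  have u_nz: "u s \<noteq> 0" if s: "s < m" for s
  proof
    assume "u s = 0"
    \<comment> \<open>dropping the row \<open>e\<^sub>s\<close> leaves \<open>u s\<close> as the only entry of column \<open>s\<close> that can be nonzero\<close>
    then have "det (minor m (Suc s) (normal_rep m u x)) = 0"
      by (intro det_zero_column[of _ m s]) (use s in \<open>auto simp: minor_def normal_rep_def skip_def\<close>)
    moreover have "gen m (Suc s) V = det (minor m 0 V) * gen m (Suc s) (normal_rep m u x)"
      using SIQ_normalise[OF gen_SIQ V dB, of "Suc s"] s unfolding u_def x_def by simp
    ultimately show False using gen_nz[of "Suc s"] s unfolding gen_def by simp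
  qed
  have "f V = det (minor m 0 V) ^ k *
      f (slice m (\<lambda>j. if j = 0 then x 0 else u (j - 1) * x j))" if f: "f \<in> SIQ m k" for f k
  proof -
    have "f V = det (minor m 0 V) ^ k * f (normal_rep m u x)"
      unfolding u_def x_def by (rule SIQ_normalise[OF f V dB])
    also have "f (normal_rep m u x) = f (slice m (\<lambda>j. if j = 0 then x 0 else u (j - 1) * x j))"
      by (rule SIQ_rescale[OF u_nz f])
    finally show ?thesis .
  qed
  with dB show ?thesis by (rule that)
qed

definition gen_witness :: "nat \<Rightarrow> nat \<Rightarrow> qrep" where
  "gen_witness m j = (\<lambda>i r.
     if i = 0 then mat 1 m (\<lambda>(_,s). if s = (if r < j then r else r - 1) then 1 else 0)
     else mat 1 1 (\<lambda>_. 1))"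

lemma gen_witness_Rep: "gen_witness m j \<in> RepQ m"
  unfolding Rep_def gen_witness_def by auto

lemma gen_at_witness: "gen m j (gen_witness m j) = 1"
proof -
  have "minor m j (gen_witness m j) = 1\<^sub>m m"
    by (rule eq_matI) (auto simp: minor_def gen_witness_def skip_def)
  then show ?thesis unfolding gen_def by (simp add: gen_witness_def)
qed

lemma gens_common_nonzero: "\<exists>W\<in>RepQ m. \<forall>j\<le>m. gen m j W \<noteq> 0"
proof -
  have "\<exists>W\<in>RepQ m. \<forall>j<m+1. gen m j W \<noteq> 0"
  proof (rule polyfuns_common_nonzero[OF _ _ gen_witness_Rep])
    fix j assume "j < m + 1"
    then show "polyfunQ m (gen m j)" by (intro polyfun_gen) simp
    show "\<exists>V\<in>RepQ m. gen m j V \<noteq> 0"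
      using gen_witness_Rep[of m j] gen_at_witness[of m j] by force
  qed
  then show ?thesis by (simp add: less_Suc_eq_le)
qed

lemma gen_slice_one_nonzero: "j \<le> m \<Longrightarrow> gen m j (slice m (\<lambda>_. 1)) \<noteq> 0"
proof -
  assume j: "j \<le> m"
  obtain W where W: "W \<in> RepQ m" "\<And>j. j \<le> m \<Longrightarrow> gen m j W \<noteq> 0"
    using gens_common_nonzero by blast
  show ?thesis
  proof (rule SIQ_reduce_to_slice[OF W])
    fix \<beta> y assume "\<And>k f. f \<in> SIQ m k \<Longrightarrow> f W = \<beta> ^ k * f (slice m y)"
    then have "gen m j W = \<beta> * (y j * gen m j (slice m (\<lambda>_. 1)))"
      using gen_SIQ[OF j] gen_slice by (metis power_one_right)
    then show ?thesis using W(2)[OF j] by auto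
  qed
qed

definition var_monom :: "nat \<Rightarrow> (nat \<Rightarrow> nat) \<Rightarrow> (nat \<Rightarrow> complex) \<Rightarrow> complex" where
  "var_monom m e y = (\<Prod>i\<le>m. y i ^ e i)"

definition mpoly_fun :: "nat \<Rightarrow> ((nat \<Rightarrow> complex) \<Rightarrow> complex) \<Rightarrow> bool" where
  "mpoly_fun m \<phi> \<longleftrightarrow> (\<exists>E C. finite E \<and> (\<forall>e\<in>E. \<forall>i>m. e i = 0) \<and>
     (\<forall>y. \<phi> y = (\<Sum>e\<in>E. C e * var_monom m e y)))"

lemma var_monom_add: "var_monom m (\<lambda>i. e1 i + e2 i) y = var_monom m e1 y * var_monom m e2 y"
  unfolding var_monom_def by (simp add: power_add prod.distrib)

lemma sum_zero_extend:
  assumes "finite A" "E \<subseteq> A"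
  shows "(\<Sum>e\<in>A. (if e \<in> E then C e else 0) * g e) = (\<Sum>e\<in>E. C e * (g e :: complex))"
  by (rule sum.mono_neutral_cong_right) (use assms in auto)

lemma mpoly_fun_add:
  assumes "mpoly_fun m \<phi>1" "mpoly_fun m \<phi>2" shows "mpoly_fun m (\<lambda>y. \<phi>1 y + \<phi>2 y)"
proof -
  obtain E1 C1 where 1: "finite E1" "\<forall>e\<in>E1. \<forall>i>m. e i = 0"
      "\<forall>y. \<phi>1 y = (\<Sum>e\<in>E1. C1 e * var_monom m e y)"
    using assms(1) unfolding mpoly_fun_def by blast
  obtain E2 C2 where 2: "finite E2" "\<forall>e\<in>E2. \<forall>i>m. e i = 0"
      "\<forall>y. \<phi>2 y = (\<Sum>e\<in>E2. C2 e * var_monom m e y)"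
    using assms(2) unfolding mpoly_fun_def by blast
  define C where "C = (\<lambda>e. (if e \<in> E1 then C1 e else 0) + (if e \<in> E2 then C2 e else 0))"
  have "\<phi>1 y + \<phi>2 y = (\<Sum>e\<in>E1 \<union> E2. C e * var_monom m e y)" for y
    using sum_zero_extend[of "E1 \<union> E2" E1 C1] sum_zero_extend[of "E1 \<union> E2" E2 C2] 1 2
    unfolding C_def by (simp add: distrib_right sum.distrib)
  then show ?thesis unfolding mpoly_fun_def using 1 2 by (intro exI[of _ "E1 \<union> E2"] exI[of _ C]) auto
qed

lemma mpoly_fun_mult:
  assumes "mpoly_fun m \<phi>1" "mpoly_fun m \<phi>2" shows "mpoly_fun m (\<lambda>y. \<phi>1 y * \<phi>2 y)"
proof -
  obtain E1 C1 where 1: "finite E1" "\<forall>e\<in>E1. \<forall>i>m. e i = 0"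
      "\<forall>y. \<phi>1 y = (\<Sum>e\<in>E1. C1 e * var_monom m e y)"
    using assms(1) unfolding mpoly_fun_def by blast
  obtain E2 C2 where 2: "finite E2" "\<forall>e\<in>E2. \<forall>i>m. e i = 0"
      "\<forall>y. \<phi>2 y = (\<Sum>e\<in>E2. C2 e * var_monom m e y)"
    using assms(2) unfolding mpoly_fun_def by blast
  define add where "add = (\<lambda>(e1::nat\<Rightarrow>nat, e2::nat\<Rightarrow>nat) i. e1 i + e2 i)"
  define E where "E = add ` (E1 \<times> E2)"
  define C where "C = (\<lambda>e. \<Sum>p\<in>{p \<in> E1 \<times> E2. add p = e}. C1 (fst p) * C2 (snd p))"
  have E: "finite E" "\<forall>e\<in>E. \<forall>i>m. e i = 0" unfolding E_def add_def using 1 2 by auto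
  have "\<phi>1 y * \<phi>2 y = (\<Sum>e\<in>E. C e * var_monom m e y)" for y
  proof -
    have "\<phi>1 y * \<phi>2 y = (\<Sum>p\<in>E1 \<times> E2. C1 (fst p) * C2 (snd p) * var_monom m (add p) y)"
      unfolding 1(3)[rule_format] 2(3)[rule_format] sum_product sum.cartesian_product
      by (rule sum.cong) (auto simp: add_def var_monom_add)
    also have "\<dots> = (\<Sum>e\<in>E. \<Sum>p\<in>{p \<in> E1 \<times> E2. add p = e}. C1 (fst p) * C2 (snd p) * var_monom m (add p) y)"
      by (rule sum.group[symmetric]) (use 1 2 E in \<open>auto simp: E_def\<close>)
    also have "\<dots> = (\<Sum>e\<in>E. C e * var_monom m e y)"
      unfolding C_def sum_distrib_right by (rule sum.cong, simp, rule sum.cong) auto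
    finally show ?thesis .
  qed
  then show ?thesis unfolding mpoly_fun_def using E by blast
qed

lemma mpoly_fun_const: "mpoly_fun m (\<lambda>_. c)"
  unfolding mpoly_fun_def
  by (intro exI[of _ "{\<lambda>_. 0}"] exI[of _ "\<lambda>_. c"]) (simp add: var_monom_def)

lemma mpoly_fun_var:
  assumes "j \<le> m" shows "mpoly_fun m (\<lambda>y. y j)"
proof -
  define e where "e = (\<lambda>i. if i = j then 1 else 0 :: nat)"
  have "var_monom m e y = (\<Prod>i\<le>m. if i = j then y i else 1)" for y
    unfolding var_monom_def e_def by (rule prod.cong) auto
  then have "var_monom m e y = y j" for y using assms by (simp add: prod.delta)
  then show ?thesis unfolding mpoly_fun_def using assms
    by (intro exI[of _ "{e}"] exI[of _ "\<lambda>_. 1"]) (auto simp: e_def)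
qed

lemma mpoly_fun_slice: "polyfunQ m f \<Longrightarrow> mpoly_fun m (\<lambda>y. f (slice m y))"
proof (induction rule: polyfun.induct)
  case (pf_coord i j r s)
  then consider "i = 0" | "i = 1" "r = 0" "s = 0" "j \<le> m" by fastforce
  then show ?case
  proof cases
    case 1
    then show ?thesis using mpoly_fun_const[of m "slice m (\<lambda>_. 0) 0 j $$ (r, s)"]
      by (simp add: normal_rep_def)
  next
    case 2
    then show ?thesis using mpoly_fun_var[of j m] by (simp add: normal_rep_def)
  qed
qed (auto intro: mpoly_fun_const mpoly_fun_add mpoly_fun_mult)

definition exp_deg :: "nat \<Rightarrow> (nat \<Rightarrow> nat) \<Rightarrow> nat" where
  "exp_deg m e = (\<Sum>i\<le>m. e i)"

lemma var_monom_scale: "var_monom m e (\<lambda>i. l * y i) = l ^ exp_deg m e * var_monom m e y"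
  unfolding var_monom_def exp_deg_def by (simp add: power_mult_distrib prod.distrib power_sum)

text \<open>Comparing coefficients of \<open>l\<close> in \<open>\<phi> (l y) = l\<^sup>k \<phi> y\<close>.\<close>
lemma homogeneous_sum_var_monoms:
  assumes E: "finite E" and \<phi>: "\<And>y. \<phi> y = (\<Sum>e\<in>E. C e * var_monom m e y)"
    and hom: "\<And>l y. l \<noteq> 0 \<Longrightarrow> \<phi> (\<lambda>i. l * y i) = l ^ k * \<phi> y"
  shows "\<phi> y = (\<Sum>e\<in>{e\<in>E. exp_deg m e = k}. C e * var_monom m e y)"
proof -
  define p where "p = (\<Sum>e\<in>E. Polynomial.monom (C e * var_monom m e y) (exp_deg m e)) - Polynomial.monom (\<phi> y) k"
  have "poly p l = 0" if "l \<in> - {0}" for l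
  proof -
    have "poly p l = (\<Sum>e\<in>E. C e * var_monom m e y * l ^ exp_deg m e) - \<phi> y * l ^ k"
      unfolding p_def by (simp add: poly_sum poly_monom)
    also have "(\<Sum>e\<in>E. C e * var_monom m e y * l ^ exp_deg m e) = \<phi> (\<lambda>i. l * y i)"
      unfolding \<phi> var_monom_scale by (rule sum.cong) auto
    finally show ?thesis using hom that by auto
  qed
  moreover have "infinite (- {0::complex})" by (simp add: Compl_eq_Diff_UNIV infinite_UNIV_char_0)
  ultimately have "p = 0" using poly_eq_0_if_infinite_zeros by blast
  then have "coeff p k = 0" by simp
  then have "(\<Sum>e\<in>E. if exp_deg m e = k then C e * var_monom m e y else 0) = \<phi> y"
    unfolding p_def by (simp add: coeff_sum coeff_monom)
  then show ?thesis using sum.inter_filter[OF E, of "\<lambda>e. C e * var_monom m e y"] by simp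
qed

lemma expvecs_le: "e \<in> expvecs m k \<Longrightarrow> e i \<le> k"
  unfolding expvecs_def by (cases "i \<le> m") (auto intro: order.trans[OF member_le_sum])

lemma finite_expvecs: "finite (expvecs m k)"
proof -
  have "expvecs m k \<subseteq> (\<lambda>f i. if i \<le> m then f i else 0) ` ({..m} \<rightarrow>\<^sub>E {..k})"
  proof
    fix e assume e: "e \<in> expvecs m k"
    then have "e = (\<lambda>i. if i \<le> m then restrict e {..m} i else 0)"
      unfolding expvecs_def by (auto simp: fun_eq_iff)
    moreover have "restrict e {..m} \<in> {..m} \<rightarrow>\<^sub>E {..k}" using expvecs_le[OF e] by auto
    ultimately show "e \<in> (\<lambda>f i. if i \<le> m then f i else 0) ` ({..m} \<rightarrow>\<^sub>E {..k})" by blast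
  qed
  then show ?thesis by (rule finite_subset) (simp add: finite_PiE)
qed

lemma digits_bound: "(\<And>i. i \<le> n \<Longrightarrow> e i < N) \<Longrightarrow> (\<Sum>i\<le>n. e i * N ^ i) < (N::nat) ^ Suc n"
proof (induction n)
  case (Suc n)
  have "Suc (e (Suc n)) * N ^ Suc n \<le> N * N ^ Suc n"
    using Suc.prems[of "Suc n"] by (intro mult_le_mono1) simp
  then show ?case using Suc by simp
qed simp

lemma digits_inj:
  "(\<And>i. i \<le> n \<Longrightarrow> e i < N) \<Longrightarrow> (\<And>i. i \<le> n \<Longrightarrow> e' i < N) \<Longrightarrow>
   (\<Sum>i\<le>n. e i * N ^ i) = (\<Sum>i\<le>n. e' i * (N::nat) ^ i) \<Longrightarrow> i \<le> n \<Longrightarrow> e i = e' i"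
proof (induction n arbitrary: i)
  case (Suc n)
  define M where "M = N ^ Suc n"
  define A where "A = (\<Sum>i\<le>n. e i * N ^ i)"
  define A' where "A' = (\<Sum>i\<le>n. e' i * N ^ i)"
  have A: "A < M" "A' < M" unfolding A_def A'_def M_def by (intro digits_bound; use Suc.prems in simp)+
  have eq: "A + e (Suc n) * M = A' + e' (Suc n) * M"
    using Suc.prems(3) unfolding A_def A'_def M_def by simp
  have "A = (A + e (Suc n) * M) mod M" using A by simp
  also have "\<dots> = A'" using eq A by simp
  finally have "A = A'" .
  moreover from this eq A have "e (Suc n) = e' (Suc n)" by simp
  ultimately show ?case using Suc.IH[of i] Suc.prems unfolding A_def A'_def by (cases "i = Suc n") auto
qed simp

text \<open>Kronecker substitution \<open>y\<^sub>i = t ^ (k+1)\<^sup>i\<close> sends distinct monomials of degree \<open>k\<close> to distinct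
  powers of \<open>t\<close>.\<close>
lemma var_monoms_independent:
  assumes z: "\<And>y. (\<Sum>e\<in>expvecs m k. a e * var_monom m e y) = 0" and e0: "e0 \<in> expvecs m k"
  shows "a e0 = 0"
proof -
  define code where "code = (\<lambda>e. \<Sum>i\<le>m. e i * Suc k ^ i)"
  have code_inj: "e = e'" if "e \<in> expvecs m k" "e' \<in> expvecs m k" "code e = code e'" for e e'
  proof
    fix i show "e i = e' i"
    proof (cases "i \<le> m")
      case True
      then show ?thesis using digits_inj[of m e "Suc k" e' i] expvecs_le[OF that(1)] expvecs_le[OF that(2)]
        that(3) unfolding code_def by (simp add: less_Suc_eq_le)
    qed (use that(1,2) in \<open>auto simp: expvecs_def\<close>)
  qed
  define p where "p = (\<Sum>e\<in>expvecs m k. Polynomial.monom (a e) (code e))"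
  have "var_monom m e (\<lambda>i. t ^ (Suc k ^ i)) = t ^ code e" for e t
    unfolding var_monom_def code_def by (simp add: power_mult[symmetric] power_sum mult.commute)
  then have "poly p t = 0" for t
    using z[of "\<lambda>i. t ^ (Suc k ^ i)"] unfolding p_def by (simp add: poly_sum poly_monom mult.commute)
  then have "p = 0" using poly_all_0_iff_0 by blast
  then have "coeff p (code e0) = 0" by simp
  moreover have "coeff p (code e0) = (\<Sum>e\<in>expvecs m k. if e = e0 then a e else 0)"
    unfolding p_def coeff_sum coeff_monom by (rule sum.cong) (use code_inj e0 in auto)
  ultimately show "a e0 = 0" using e0 finite_expvecs by (simp add: sum.delta')
qed

lemma SI_mult:
  "f \<in> SI p q a b k \<Longrightarrow> g \<in> SI p q a b l \<Longrightarrow> (\<lambda>V. f V * g V) \<in> SI p q a b (k + l)"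
  unfolding SI_def by (auto intro: pf_mult simp: power_add)

lemma SI_prod:
  "finite S \<Longrightarrow> (\<And>x. x \<in> S \<Longrightarrow> f x \<in> SI p q a b (d x)) \<Longrightarrow>
   (\<lambda>V. \<Prod>x\<in>S. f x V) \<in> SI p q a b (\<Sum>x\<in>S. d x)"
proof (induction S rule: finite_induct)
  case empty then show ?case unfolding SI_def using pf_const[of p q a b 1] by simp
next
  case (insert x S) then show ?case using SI_mult[of "f x" p q a b "d x"] by simp
qed

lemma SI_power: "f \<in> SI p q a b k \<Longrightarrow> (\<lambda>V. f V ^ n) \<in> SI p q a b (n * k)"
  using SI_prod[of "{..<n}" "\<lambda>_. f" p q a b "\<lambda>_. k"] by simp

lemma SI_lincomb:
  assumes "finite S" "\<And>x. x \<in> S \<Longrightarrow> f x \<in> SI p q a b k"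
  shows "(\<lambda>V. \<Sum>x\<in>S. c x * f x V) \<in> SI p q a b k"
  using assms unfolding SI_def
  by (auto intro!: polyfun_sum pf_mult pf_const simp: sum_distrib_left mult.left_commute)

lemma gen_monom_SIQ: "e \<in> expvecs m k \<Longrightarrow> monom m (gen m) e \<in> SIQ m k"
  using SI_prod[of "{..m}" "\<lambda>i V. gen m i V ^ e i" _ _ _ _ e] SI_power[OF gen_SIQ]
  unfolding monom_def expvecs_def by (simp add: fun_eq_iff)

lemma monom_gen_slice:
  "monom m (gen m) e (slice m y) = monom m (gen m) e (slice m (\<lambda>_. 1)) * var_monom m e y"
  unfolding monom_def var_monom_def gen_slice[of m _ y]
  by (simp add: power_mult_distrib prod.distrib mult.commute)

lemma monom_gen_slice_nonzero: "monom m (gen m) e (slice m (\<lambda>_. 1)) \<noteq> 0"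
  unfolding monom_def using gen_slice_one_nonzero by (simp add: prod_zero_iff)

lemma gen_monoms_independent:
  assumes "\<forall>V\<in>RepQ m. (\<Sum>e\<in>expvecs m k. c e * monom m (gen m) e V) = 0" "e \<in> expvecs m k"
  shows "c e = 0"
proof -
  have "(\<Sum>e\<in>expvecs m k. (c e * monom m (gen m) e (slice m (\<lambda>_. 1))) * var_monom m e y) = 0" for y
  proof -
    have "(\<Sum>e\<in>expvecs m k. c e * monom m (gen m) e (slice m y)) = 0"
      using assms(1) normal_rep_Rep by blast
    then show ?thesis by (simp add: monom_gen_slice[of m _ y] mult.assoc)
  qed
  then have "c e * monom m (gen m) e (slice m (\<lambda>_. 1)) = 0"
    by (rule var_monoms_independent[OF _ assms(2)])
  then show ?thesis using monom_gen_slice_nonzero by simp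
qed

lemma SIQ_on_slice:
  assumes f: "f \<in> SIQ m k"
  shows "\<exists>C. \<forall>y. f (slice m y) = (\<Sum>e\<in>expvecs m k. C e * var_monom m e y)"
proof -
  obtain E C where E: "finite E" "\<forall>e\<in>E. \<forall>i>m. e i = 0"
    and C: "\<And>y. f (slice m y) = (\<Sum>e\<in>E. C e * var_monom m e y)"
    using mpoly_fun_slice[OF SI_polyfun[OF f]] unfolding mpoly_fun_def by blast
  define D where "D = {e\<in>E. exp_deg m e = k}"
  have D: "D \<subseteq> expvecs m k" using E(2) by (auto simp: D_def expvecs_def exp_deg_def)
  have "f (slice m y) = (\<Sum>e\<in>expvecs m k. (if e \<in> D then C e else 0) * var_monom m e y)" for y
  proof -
    have "f (slice m y) = (\<Sum>e\<in>D. C e * var_monom m e y)"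
      unfolding D_def by (rule homogeneous_sum_var_monoms[OF E(1) C SIQ_slice_homogeneous[OF _ f]])
    also have "\<dots> = (\<Sum>e\<in>expvecs m k. (if e \<in> D then C e else 0) * var_monom m e y)"
      by (rule sum_zero_extend[OF finite_expvecs D, symmetric])
    finally show ?thesis .
  qed
  then show ?thesis by (intro exI[of _ "\<lambda>e. if e \<in> D then C e else 0"]) blast
qed

lemma gen_monoms_span:
  assumes f: "f \<in> SIQ m k"
  shows "\<exists>c. \<forall>V\<in>RepQ m. f V = (\<Sum>e\<in>expvecs m k. c e * monom m (gen m) e V)"
proof -
  obtain C where C: "\<And>y. f (slice m y) = (\<Sum>e\<in>expvecs m k. C e * var_monom m e y)"
    using SIQ_on_slice[OF f] by blast
  define c where "c e = C e / monom m (gen m) e (slice m (\<lambda>_. 1))" for e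
  define g where "g V = (\<Sum>e\<in>expvecs m k. c e * monom m (gen m) e V)" for V
  have g: "g \<in> SIQ m k"
    unfolding g_def[abs_def] by (intro SI_lincomb finite_expvecs gen_monom_SIQ)
  have on_slice: "f (slice m y) = g (slice m y)" for y
    unfolding C g_def c_def monom_gen_slice[of m _ y] using monom_gen_slice_nonzero by (intro sum.cong) auto
  \<comment> \<open>both sides are semi-invariants of the same weight, so they agree wherever all \<open>gen m j\<close> are nonzero\<close>
  have eq_off_zeros: "f V = g V" if V: "V \<in> RepQ m" and nz: "(\<Prod>j\<le>m. gen m j V) \<noteq> 0" for V
  proof (rule SIQ_reduce_to_slice[OF V])
    show "gen m j V \<noteq> 0" if "j \<le> m" for j using nz that by (simp add: prod_zero_iff)
    fix \<beta> y assume "\<And>k f. f \<in> SIQ m k \<Longrightarrow> f V = \<beta> ^ k * f (slice m y)"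
    then have "f V = \<beta> ^ k * f (slice m y)" "g V = \<beta> ^ k * g (slice m y)" using f g by blast+
    then show "f V = g V" using on_slice by simp
  qed
  obtain W where W: "W \<in> RepQ m" "\<And>j. j \<le> m \<Longrightarrow> gen m j W \<noteq> 0"
    using gens_common_nonzero by blast
  have prod_gen: "polyfunQ m (\<lambda>V. \<Prod>j\<le>m. gen m j V)" by (intro polyfun_prod polyfun_gen) auto
  have "f V = g V" if "V \<in> RepQ m" for V
    by (rule polyfun_eq_if_eq_off_zeros[OF SI_polyfun[OF f] SI_polyfun[OF g] prod_gen W(1) _ eq_off_zeros that])
      (use W(2) in \<open>simp add: prod_zero_iff\<close>)
  then show ?thesis unfolding g_def by blast
qed

theorem mainTheorem7:
  fixes m :: nat
  assumes "m \<ge> 1"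
  defines "a \<equiv> (\<lambda>i::nat. if i = 0 then m else 1)"
      and "b \<equiv> (\<lambda>j::nat. 1::nat)"
  shows "\<exists>F :: nat \<Rightarrow> qrep \<Rightarrow> complex.
     (\<forall>i\<le>m. F i \<in> SI 2 (m+1) a b 1) \<and>
     (\<forall>k. (\<forall>c :: (nat \<Rightarrow> nat) \<Rightarrow> complex.
              (\<forall>V \<in> Rep 2 (m+1) a b. (\<Sum>e\<in>expvecs m k. c e * monom m F e V) = 0)
              \<longrightarrow> (\<forall>e\<in>expvecs m k. c e = 0))
        \<and> (\<forall>f \<in> SI 2 (m+1) a b k. \<exists>c :: (nat \<Rightarrow> nat) \<Rightarrow> complex.
              \<forall>V \<in> Rep 2 (m+1) a b. f V = (\<Sum>e\<in>expvecs m k. c e * monom m F e V)))"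
  \<comment> \<open>the argument does not need \<open>m \<ge> 1\<close>\<close>
  unfolding a_def b_def
proof (intro exI[of _ "gen m"] conjI allI impI ballI)
  show "gen m i \<in> SIQ m 1" if "i \<le> m" for i using that by (rule gen_SIQ)
  show "c e = 0" if "\<forall>V\<in>RepQ m. (\<Sum>e\<in>expvecs m k. c e * monom m (gen m) e V) = 0"
    and "e \<in> expvecs m k" for k c e
    using that by (rule gen_monoms_independent)
  show "\<exists>c. \<forall>V\<in>RepQ m. f V = (\<Sum>e\<in>expvecs m k. c e * monom m (gen m) e V)"
    if "f \<in> SIQ m k" for k f
    using that by (rule gen_monoms_span)
qed

end
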